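(* Let $G_{\mathrm{inv}}$ be the $q$-grammar with master variables $S=\{x,y\}$, rule $x_j\mapsto q^jy_jx_{j+1}$, $y_j\mapsto q^jy_jx_{j+1}$, and order AIO, with $q$-derivative $D$, and let $\phi$ be the evaluation $\phi(x_j)=x$, $\phi(y_j)=y$ for all $j$ (into the field of rational functions in commuting indeterminates $q,x,y$ over $\mathbb{K}$). Then for every $i\ge0$, as formal power series in $u$, \[ \phi\big(\mathrm{Gen}^{(G_{\mathrm{inv}})}_q(x_i^{-1};u)\big)=\frac{1-x^{-1}y\,e_q\big((x-y)uq^i\big)}{x-y},\qquad \phi\big(\mathrm{Gen}^{(G_{\mathrm{inv}})}_q(y_i^{-1};u)\big)=\frac{1-xy^{-1}\,E_q\big((y-x)uq^i\big)}{y-x}. \]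
   Context: Let $\mathbb{K}$ be a commutative ring with unity and characteristic zero, $q$ an indeterminate. For a set $S$ of master variables, $\mathbb{S}=\{s_i:s\in S,\ i\ge0\}$ is a set of non-commuting variables, $F(\mathbb{S})$ the free group on $\mathbb{S}$ and $\mathbb{E}=\mathbb{K}[q][F(\mathbb{S})]$ its group algebra. A rule $R$ assigns to each $s_i$ an element $R(s_i)\in\mathbb{E}$, extended by $R(s_i^{-1})=-s_i^{-1}R(s_i)s_{i+1}^{-1}$. The up-arrow $\uparrow$ is the linear map replacing each letter $s_i^{\pm1}$ by $s_{i+1}^{\pm1}$. An order rewrites each word by permuting its letters; AIO stably reorders letters according to the position of their underlying variable in $x_0,y_0,x_1,y_1,\dots$. The $q$-derivative of a $q$-grammar $(S,R,\rho)$ is the $\mathbb{K}[q]$-linear map with $D(w_1\cdots w_n)=\sum_{j=1}^n\rho\big(w_1\cdots w_{j-1}R(w_j)\uparrow(w_{j+1}\cdots w_n)\big)$ for letters $w_j\in\mathbb{S}\cup\mathbb{S}^{-1}$, $D^0=\mathrm{id}$, $D^k=D\circ D^{k-1}$. An evaluation extends to a $\mathbb{K}[q]$-linear ring morphism with $\phi(s_i^{-1})=\phi(s_i)^{-1}$. $\mathrm{Gen}^{(G)}_q(f;u)=\sum_{n\ge0}D^n(f)\,u^n/(q;q)_n$ with $(q;q)_n=\prod_{i=1}^n(1-q^i)$, and $\phi$ is applied coefficientwise. $e_q(u)=\sum_{n\ge0}u^n/(q;q)_n$, $E_q(u)=\sum_{n\ge0}q^{\binom n2}u^n/(q;q)_n$.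 *)

theory Defs
  imports "HOL-Computational_Algebra.Computational_Algebra"
begin

datatype mvar = VX | VY

text \<open>A letter of S-bold union its inverses: (s, i, True) is s_i and (s, i, False) is s_i^{-1}.
  A word (list of letters) denotes the corresponding product in the free group F(S-bold).\<close>
type_synonym letter = "mvar \<times> nat \<times> bool"
type_synonym word = "letter list"

text \<open>Elements of E = K[q][F(S-bold)] are represented as finite formal sums
  (lists of coefficient/word pairs); all maps below are defined on words and
  extended linearly, so they are maps on E.\<close>
type_synonym 'k elem = "('k poly \<times> word) list"

type_synonym 'k rule = "mvar \<Rightarrow> nat \<Rightarrow> 'k elem"

definition up_letter :: "letter \<Rightarrow> letter" where
  "up_letter l = (case l of (s, i, b) \<Rightarrow> (s, Suc i, b))"

definition up_word :: "word \<Rightarrow> word" where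
  "up_word w = map up_letter w"

fun rule_ext :: "'k::comm_ring_1 rule \<Rightarrow> letter \<Rightarrow> 'k elem" where
  "rule_ext R (s, i, True) = R s i"
| "rule_ext R (s, i, False) =
     map (\<lambda>(c, w). (- c, [(s, i, False)] @ w @ [(s, Suc i, False)])) (R s i)"

text \<open>The order AIO: stable reordering of the letters according to the position of their
  underlying variable in x_0, y_0, x_1, y_1, ...  (sort_key is a stable sort).\<close>
definition aio_key :: "letter \<Rightarrow> nat" where
  "aio_key l = (case l of (s, i, b) \<Rightarrow> 2 * i + (case s of VX \<Rightarrow> 0 | VY \<Rightarrow> 1))"

definition AIO :: "word \<Rightarrow> word" where
  "AIO w = sort_key aio_key w"

text \<open>D(w_1 ... w_n) = sum_j rho(w_1 ... w_{j-1} R(w_j) up(w_{j+1} ... w_n)).\<close>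
definition qder_word :: "'k::comm_ring_1 rule \<Rightarrow> (word \<Rightarrow> word) \<Rightarrow> word \<Rightarrow> 'k elem" where
  "qder_word R \<rho> ws =
     concat (map (\<lambda>j. map (\<lambda>(c, w). (c, \<rho> (take j ws @ w @ up_word (drop (Suc j) ws))))
                           (rule_ext R (ws ! j)))
                 [0..<length ws])"

definition qder :: "'k::comm_ring_1 rule \<Rightarrow> (word \<Rightarrow> word) \<Rightarrow> 'k elem \<Rightarrow> 'k elem" where
  "qder R \<rho> f =
     concat (map (\<lambda>(c, w). map (\<lambda>(c', w'). (c * c', w')) (qder_word R \<rho> w)) f)"

definition qder_pow :: "'k::comm_ring_1 rule \<Rightarrow> (word \<Rightarrow> word) \<Rightarrow> nat \<Rightarrow> 'k elem \<Rightarrow> 'k elem" where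
  "qder_pow R \<rho> n = (qder R \<rho> ^^ n)"

text \<open>K[q, x, y] is represented as K[y][x][q] (outer indeterminate q, middle x, inner y),
  and K(q, x, y) as its field of fractions.\<close>
type_synonym 'k ratfun = "'k poly poly poly fract"

definition Qv :: "'k::idom ratfun" where
  "Qv = Fract [:0, 1:] 1"

definition Xv :: "'k::idom ratfun" where
  "Xv = Fract [:[:0, 1:]:] 1"

definition Yv :: "'k::idom ratfun" where
  "Yv = Fract [:[:[:0, 1:]:]:] 1"

definition coeff_emb :: "'k::idom poly \<Rightarrow> 'k ratfun" where
  "coeff_emb c = Fract (map_poly (\<lambda>a. [:[:a:]:]) c) 1"

definition eval_word :: "(mvar \<Rightarrow> nat \<Rightarrow> 'k::idom ratfun) \<Rightarrow> word \<Rightarrow> 'k ratfun" where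
  "eval_word ev w = prod_list (map (\<lambda>(s, i, b). if b then ev s i else inverse (ev s i)) w)"

definition eval_elem :: "(mvar \<Rightarrow> nat \<Rightarrow> 'k::idom ratfun) \<Rightarrow> 'k elem \<Rightarrow> 'k ratfun" where
  "eval_elem ev f = sum_list (map (\<lambda>(c, w). coeff_emb c * eval_word ev w) f)"

definition qpoch :: "nat \<Rightarrow> 'k::idom ratfun" where
  "qpoch n = (\<Prod>i=1..n. 1 - Qv ^ i)"

definition gen_eval ::
  "'k::idom rule \<Rightarrow> (word \<Rightarrow> word) \<Rightarrow> (mvar \<Rightarrow> nat \<Rightarrow> 'k ratfun) \<Rightarrow> 'k elem \<Rightarrow> 'k ratfun fps" where
  "gen_eval R \<rho> ev f = Abs_fps (\<lambda>n. eval_elem ev (qder_pow R \<rho> n f) / qpoch n)"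

definition e_q :: "'k::idom ratfun fps" where
  "e_q = Abs_fps (\<lambda>n. 1 / qpoch n)"

definition E_q :: "'k::idom ratfun fps" where
  "E_q = Abs_fps (\<lambda>n. Qv ^ (n choose 2) / qpoch n)"

definition R_inv :: "'k::comm_ring_1 rule" where
  "R_inv s j = [(monom 1 j, [(VY, j, True), (VX, Suc j, True)])]"

definition phi_inv :: "mvar \<Rightarrow> nat \<Rightarrow> 'k::idom ratfun" where
  "phi_inv s j = (case s of VX \<Rightarrow> Xv | VY \<Rightarrow> Yv)"

end

theory Submission
  imports Defs "HOL-Library.Function_Algebras"
begin

text \<open>
  Both the order AIO and the evaluation only see exponents, so D can be followed in the group
  algebra of the abelianised free group, where an element of E is determined by the sums of
  c H(e(w)) over its terms c w, for all functions H of the exponent vector e(w). On AIO-sorted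
  words the derivative depends only on the exponent vector: a factor s_k s_k^-1 contributes
  R(s_k) s_{k+1}^-1 and - s_k s_k^-1 R(s_k) s_{k+1}^-1, which cancel. D obeys a Leibniz rule,
  and R(x_j) = R(y_j) makes the differences y_j - x_j constants. Induction on n then gives
  D^{n+1}(x_i^-1) = (-1)^{n+1} q^{i(n+1)} x_i^-1 y_i (y_{i+1} - x_{i+1}) ... (y_{i+n} - x_{i+n})
  and D^{n+1}(y_i^-1) = (-1)^{n+1} q^{i(n+1) + (n+1 choose 2)}
  (x_{i+1} - y_{i+1}) ... (x_{i+n} - y_{i+n}) x_{i+n+1} y_{i+n+1}^-1,
  and evaluating and summing gives the two q-exponential series.
\<close>

lemma map_poly_add_hom:
  assumes "f 0 = 0" "\<And>a b. f (a + b) = f a + f b"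
  shows "map_poly f (p + q) = map_poly f p + map_poly f q"
  by (intro poly_eqI) (simp add: coeff_map_poly assms)

lemma map_poly_mult_hom:
  fixes f :: "'a::comm_semiring_0 \<Rightarrow> 'b::comm_semiring_0"
  assumes "f 0 = 0" "\<And>a b. f (a + b) = f a + f b" "\<And>a b. f (a * b) = f a * f b"
  shows "map_poly f (p * q) = map_poly f p * map_poly f q"
proof (induction p)
  case (pCons a p)
  then show ?case
    by (simp add: map_poly_add_hom map_poly_smult map_poly_pCons assms)
qed simp

lemma coeff_emb_add [simp]: "coeff_emb (a + b) = coeff_emb a + coeff_emb b"
  by (simp add: coeff_emb_def map_poly_add_hom)

lemma coeff_emb_mult [simp]: "coeff_emb (a * b) = coeff_emb a * coeff_emb b"
  by (simp add: coeff_emb_def map_poly_mult_hom)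

lemma coeff_emb_1 [simp]: "coeff_emb 1 = 1"
proof -
  have "map_poly (\<lambda>a. [:[:a:]:]) (1 :: 'a::idom poly) = 1"
    by (simp add: map_poly_pCons one_pCons)
  then show ?thesis
    by (simp add: coeff_emb_def One_fract_def)
qed

lemma coeff_emb_minus [simp]: "coeff_emb (- a) = - coeff_emb a"
proof -
  have "map_poly (\<lambda>a. [:[:a:]:]) (- a) = - map_poly (\<lambda>a. [:[:a:]:]) a"
    by (intro poly_eqI) (simp add: coeff_map_poly)
  then show ?thesis
    by (simp add: coeff_emb_def)
qed

lemma coeff_emb_power [simp]: "coeff_emb (a ^ n) = coeff_emb a ^ n"
  by (induction n) simp_all

lemma coeff_emb_monom_1 [simp]: "coeff_emb (monom 1 k) = (Qv :: 'k::idom ratfun) ^ k"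
proof -
  have "coeff_emb [:0, 1:] = (Qv :: 'k ratfun)"
    by (simp add: coeff_emb_def Qv_def map_poly_pCons one_pCons)
  then show ?thesis
    by (simp add: monom_altdef)
qed

section \<open>Abelianisation\<close>

text \<open>Sums of exponent vectors are kept unexpanded, so that arguments of H match syntactically.\<close>
declare plus_fun_apply [simp del] zero_fun_apply [simp del]

type_synonym expvec = "mvar \<Rightarrow> nat \<Rightarrow> int"

definition exps_letter :: "letter \<Rightarrow> expvec" where
  "exps_letter l =
     (case l of (s, k, b) \<Rightarrow> \<lambda>s' k'. if s' = s \<and> k' = k then (if b then 1 else -1) else 0)"

definition exps :: "word \<Rightarrow> expvec" where
  "exps w = sum_list (map exps_letter w)"

lemma exps_Nil [simp]: "exps [] = 0"
  by (simp add: exps_def)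

lemma exps_Cons [simp]: "exps (l # w) = exps_letter l + exps w"
  by (simp add: exps_def)

lemma exps_append [simp]: "exps (u @ w) = exps u + exps w"
  by (simp add: exps_def)

lemma exps_AIO [simp]: "exps (AIO w) = exps w"
  unfolding AIO_def exps_def by (metis mset_map mset_sort sum_mset_sum_list)

lemma exps_letter_inverse: "exps_letter (s, k, False) = - exps_letter (s, k, True)"
  by (simp add: exps_letter_def fun_eq_iff)

lemma exps_up_word_apply: "exps (up_word w) s k = (if k = 0 then 0 else exps w s (k - 1))"
  by (induction w) (auto simp: up_word_def up_letter_def exps_letter_def plus_fun_apply zero_fun_apply)

lemma exps_up_word_cong: "exps w = exps w' \<Longrightarrow> exps (up_word w) = exps (up_word w')"
  by (simp add: fun_eq_iff exps_up_word_apply)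

text \<open>abel_eq f g: f and g agree in the group algebra of the abelianised free group.\<close>
definition abel_sum :: "'k::idom elem \<Rightarrow> (expvec \<Rightarrow> 'k ratfun) \<Rightarrow> 'k ratfun" where
  "abel_sum f H = sum_list (map (\<lambda>(c, w). coeff_emb c * H (exps w)) f)"

definition abel_eq :: "'k::idom elem \<Rightarrow> 'k elem \<Rightarrow> bool" where
  "abel_eq f g \<longleftrightarrow> (\<forall>H. abel_sum f H = abel_sum g H)"

lemma abel_eq_refl [simp]: "abel_eq f f"
  by (simp add: abel_eq_def)

lemma abel_eq_sym: "abel_eq f g \<Longrightarrow> abel_eq g f"
  by (simp add: abel_eq_def)

lemma abel_eq_trans [trans]: "abel_eq f g \<Longrightarrow> abel_eq g h \<Longrightarrow> abel_eq f h"
  by (simp add: abel_eq_def)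

lemma abel_sum_Nil [simp]: "abel_sum [] H = 0"
  by (simp add: abel_sum_def)

lemma abel_sum_Cons [simp]: "abel_sum ((c, w) # f) H = coeff_emb c * H (exps w) + abel_sum f H"
  by (simp add: abel_sum_def)

lemma abel_sum_append [simp]: "abel_sum (f @ g) H = abel_sum f H + abel_sum g H"
  by (simp add: abel_sum_def)

lemma abel_sum_add_fun: "abel_sum f (\<lambda>e. A e + B e) = abel_sum f A + abel_sum f B"
  by (induction f) (auto simp: algebra_simps)

lemma abel_sum_mult_fun: "abel_sum f (\<lambda>e. a * A e) = a * abel_sum f A"
  by (induction f) (auto simp: algebra_simps)

lemma abel_sum_zero_fun [simp]: "abel_sum f (\<lambda>e. 0) = 0"
  by (induction f) auto

lemma abel_sum_map_Cons:
  "abel_sum (map (\<lambda>(c, w). (c, l # w)) f) H = abel_sum f (\<lambda>e. H (exps_letter l + e))"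
  by (induction f) auto

lemma abel_sum_map_append:
  "abel_sum (map (\<lambda>(c, w). (c, w @ v)) f) H = abel_sum f (\<lambda>e. H (e + exps v))"
  by (induction f) auto

lemma abel_sum_map_exps_invariant:
  "(\<And>w. exps (\<rho> w) = exps w) \<Longrightarrow> abel_sum (map (\<lambda>(c, w). (c, \<rho> w)) f) H = abel_sum f H"
  by (induction f) auto

lemma abel_sum_map_scale:
  "abel_sum (map (\<lambda>(d, w). (c * d, w)) f) H = coeff_emb c * abel_sum f H"
  by (induction f) (auto simp: algebra_simps)

lemma abel_sum_map_conjugate:
  "abel_sum (map (\<lambda>(c, w). (- c, a # w @ [b])) f) H
     = - abel_sum f (\<lambda>e. H (exps_letter a + (e + exps_letter b)))"
  by (induction f) (auto simp: algebra_simps)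

lemma qder_word_Nil [simp]: "qder_word R \<rho> [] = []"
  by (simp add: qder_word_def)

lemma qder_word_eq_map: "qder_word R \<rho> ws = map (\<lambda>(c, w). (c, \<rho> w)) (qder_word R (\<lambda>w. w) ws)"
  by (simp add: qder_word_def map_concat comp_def case_prod_unfold)

lemma qder_word_Cons:
  "qder_word R (\<lambda>w. w) (l # ws) = map (\<lambda>(c, w). (c, w @ up_word ws)) (rule_ext R l)
     @ map (\<lambda>(c, w). (c, l # w)) (qder_word R (\<lambda>w. w) ws)"
proof -
  have "[0..<length (l # ws)] = 0 # map Suc [0..<length ws]"
    by (simp add: upt_conv_Cons map_Suc_upt del: upt_Suc)
  then show ?thesis
    unfolding qder_word_def by (simp add: map_concat comp_def case_prod_unfold)
qed

abbreviation qder_word_id :: "'k::comm_ring_1 rule \<Rightarrow> word \<Rightarrow> 'k elem" where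
  "qder_word_id R \<equiv> qder_word R (\<lambda>w. w)"

lemma abel_sum_qder_word_Cons:
  "abel_sum (qder_word_id R (l # ws)) H
     = abel_sum (rule_ext R l) (\<lambda>e. H (e + exps (up_word ws)))
       + abel_sum (qder_word_id R ws) (\<lambda>e. H (exps_letter l + e))"
  by (simp add: qder_word_Cons abel_sum_map_append abel_sum_map_Cons)

lemma abel_sum_qder_word_append:
  "abel_sum (qder_word_id R (u @ ws)) H
     = abel_sum (qder_word_id R u) (\<lambda>e. H (e + exps (up_word ws)))
       + abel_sum (qder_word_id R ws) (\<lambda>e. H (exps u + e))"
proof (induction u arbitrary: H)
  case (Cons l u)
  then show ?case
    by (simp add: abel_sum_qder_word_Cons up_word_def add.assoc)
qed simp

lemma abel_sum_qder_word_AIO: "abel_sum (qder_word R AIO w) H = abel_sum (qder_word_id R w) H"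
  by (subst qder_word_eq_map) (simp add: abel_sum_map_exps_invariant)

lemma abel_sum_qder:
  "abel_sum (qder R \<rho> f) H = sum_list (map (\<lambda>(c, w). coeff_emb c * abel_sum (qder_word R \<rho> w) H) f)"
  by (induction f) (auto simp: qder_def abel_sum_map_scale)

lemma abel_sum_qder_Nil [simp]: "abel_sum (qder R \<rho> []) H = 0"
  by (simp add: qder_def)

lemma abel_sum_qder_Cons [simp]:
  "abel_sum (qder R \<rho> ((c, w) # f)) H
     = coeff_emb c * abel_sum (qder_word R \<rho> w) H + abel_sum (qder R \<rho> f) H"
  by (simp add: abel_sum_qder)

lemma abel_sum_qder_append [simp]:
  "abel_sum (qder R \<rho> (f @ g)) H = abel_sum (qder R \<rho> f) H + abel_sum (qder R \<rho> g) H"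
  by (simp add: abel_sum_qder)

lemma abel_sum_qder_AIO: "abel_sum (qder R AIO f) H = abel_sum (qder R (\<lambda>w. w) f) H"
  by (simp add: abel_sum_qder abel_sum_qder_word_AIO)

lemma abel_sum_qder_word_cancel:
  "abel_sum (qder_word_id R ((s, k, b) # (s, k, \<not> b) # w)) H = abel_sum (qder_word_id R w) H"
  by (cases b)
    (simp_all add: abel_sum_qder_word_Cons abel_sum_map_conjugate up_word_def up_letter_def
      exps_letter_inverse algebra_simps)

definition letter_power :: "mvar \<Rightarrow> nat \<Rightarrow> int \<Rightarrow> word" where
  "letter_power s k n =
     (if 0 \<le> n then replicate (nat n) (s, k, True) else replicate (nat (- n)) (s, k, False))"

lemma letter_power_succ: "0 \<le> n \<Longrightarrow> letter_power s k (n + 1) = (s, k, True) # letter_power s k n"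
  by (simp add: letter_power_def nat_add_distrib)

lemma letter_power_pred: "n \<le> 0 \<Longrightarrow> letter_power s k (n - 1) = (s, k, False) # letter_power s k n"
proof -
  assume "n \<le> 0"
  then have "nat (- (n - 1)) = Suc (nat (- n))"
    by simp
  with \<open>n \<le> 0\<close> show ?thesis
    by (simp add: letter_power_def)
qed

lemma exps_replicate: "exps (replicate m l) = (\<lambda>s k. int m * exps_letter l s k)"
  by (induction m) (simp_all add: fun_eq_iff plus_fun_apply zero_fun_apply algebra_simps)

lemma exps_letter_power: "exps (letter_power s k n) = (\<lambda>s' k'. if s' = s \<and> k' = k then n else 0)"
  by (auto simp: letter_power_def exps_replicate exps_letter_def fun_eq_iff)

lemma exps_single_letter:
  assumes "\<forall>l\<in>set w. \<exists>b. l = (s, k, b)"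
  shows "exps w = exps (letter_power s k (exps w s k))"
proof -
  have "exps w s' k' = 0" if "(s', k') \<noteq> (s, k)" for s' k'
    using assms that by (induction w) (auto simp: exps_letter_def plus_fun_apply zero_fun_apply)
  then show ?thesis
    by (auto simp: exps_letter_power fun_eq_iff)
qed

lemma abel_sum_qder_word_Cons_cong:
  assumes "exps w = exps w'" "\<And>H. abel_sum (qder_word_id R w) H = abel_sum (qder_word_id R w') H"
  shows "abel_sum (qder_word_id R (l # w)) H = abel_sum (qder_word_id R (l # w')) H"
  using assms exps_up_word_cong [OF assms(1)] by (simp add: abel_sum_qder_word_Cons)

lemma abel_sum_qder_word_Cons_letter_power:
  "abel_sum (qder_word_id R ((s, k, b) # letter_power s k n)) H
     = abel_sum (qder_word_id R (letter_power s k (if b then n + 1 else n - 1))) H"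
proof (cases b)
  case True
  show ?thesis
  proof (cases "0 \<le> n")
    case True
    with \<open>b\<close> show ?thesis
      by (simp add: letter_power_succ)
  next
    case False
    then have "letter_power s k n = (s, k, False) # letter_power s k (n + 1)"
      using letter_power_pred [of "n + 1" s k] by simp
    with \<open>b\<close> show ?thesis
      using abel_sum_qder_word_cancel [of R s k True] by simp
  qed
next
  case False
  show ?thesis
  proof (cases "n \<le> 0")
    case True
    with \<open>\<not> b\<close> show ?thesis
      by (simp add: letter_power_pred)
  next
    case False
    then have "letter_power s k n = (s, k, True) # letter_power s k (n - 1)"
      using letter_power_succ [of "n - 1" s k] by simp
    with \<open>\<not> b\<close> show ?thesis
      using abel_sum_qder_word_cancel [of R s k False] by simp
  qed
qed

lemma abel_sum_qder_word_single_letter: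
  assumes "\<forall>l\<in>set w. \<exists>b. l = (s, k, b)"
  shows "abel_sum (qder_word_id R w) H = abel_sum (qder_word_id R (letter_power s k (exps w s k))) H"
  using assms
proof (induction w arbitrary: H)
  case Nil
  then show ?case
    by (simp add: letter_power_def zero_fun_apply)
next
  case (Cons l w)
  then obtain b where l: "l = (s, k, b)"
    by auto
  have exps_Cons_at: "exps (l # w) s k = (if b then exps w s k + 1 else exps w s k - 1)"
    by (simp add: l exps_letter_def plus_fun_apply)
  have "abel_sum (qder_word_id R (l # w)) H
      = abel_sum (qder_word_id R (l # letter_power s k (exps w s k))) H"
    using Cons exps_single_letter [of w s k] by (intro abel_sum_qder_word_Cons_cong) auto
  also have "\<dots> = abel_sum (qder_word_id R (letter_power s k (exps (l # w) s k))) H"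
    unfolding exps_Cons_at unfolding l by (simp add: abel_sum_qder_word_Cons_letter_power)
  finally show ?case .
qed

lemma aio_key_eq_letter:
  assumes "aio_key l = \<kappa>"
  shows "\<exists>b. l = (if even \<kappa> then VX else VY, \<kappa> div 2, b)"
proof -
  obtain s k b where "l = (s, k, b)"
    by (cases l)
  with assms show ?thesis
    by (cases s) (auto simp: aio_key_def)
qed

lemma abel_sum_qder_word_same_key:
  assumes "\<forall>l\<in>set w1. aio_key l = \<kappa>" "\<forall>l\<in>set w2. aio_key l = \<kappa>" "exps w1 = exps w2"
  shows "abel_sum (qder_word_id R w1) H = abel_sum (qder_word_id R w2) H"
proof -
  define s where "s = (if even \<kappa> then VX else VY)"
  define k where "k = \<kappa> div 2"
  have "\<forall>l\<in>set w1. \<exists>b. l = (s, k, b)" "\<forall>l\<in>set w2. \<exists>b. l = (s, k, b)"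
    using assms(1,2) aio_key_eq_letter unfolding s_def k_def by blast+
  with assms(3) show ?thesis
    by (simp add: abel_sum_qder_word_single_letter)
qed

lemma sorted_split_min_key:
  assumes "sorted (map f w)" "\<forall>l\<in>set w. \<kappa> \<le> f l"
  shows "w = filter (\<lambda>l. f l = \<kappa>) w @ filter (\<lambda>l. f l \<noteq> \<kappa>) w"
  using assms
proof (induction w)
  case (Cons l w)
  show ?case
  proof (cases "f l = \<kappa>")
    case False
    with Cons.prems have "\<forall>l'\<in>set w. \<kappa> < f l'"
      by fastforce
    then have "filter (\<lambda>l. f l = \<kappa>) w = []" "filter (\<lambda>l. f l \<noteq> \<kappa>) w = w"
      by (auto simp: filter_empty_conv intro!: filter_True)
    then show ?thesis
      using False by simp
  qed (use Cons in simp)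
qed simp

lemma exps_filter_key:
  "exps (filter (\<lambda>l. aio_key l = \<kappa>) w) = (\<lambda>s k. if aio_key (s, k, True) = \<kappa> then exps w s k else 0)"
  "exps (filter (\<lambda>l. aio_key l \<noteq> \<kappa>) w) = (\<lambda>s k. if aio_key (s, k, True) = \<kappa> then 0 else exps w s k)"
  by (induction w)
    (auto simp: fun_eq_iff plus_fun_apply zero_fun_apply exps_letter_def aio_key_def)

lemma abel_sum_qder_word_sorted:
  assumes "sorted (map aio_key w1)" "sorted (map aio_key w2)" "exps w1 = exps w2"
  shows "abel_sum (qder_word_id R w1) H = abel_sum (qder_word_id R w2) H"
  using assms
proof (induction "length w1 + length w2" arbitrary: w1 w2 H rule: less_induct)
  case less
  show ?case
  proof (cases "w1 @ w2 = []")
    case False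
    \<comment> \<open>split both words into the block of letters of least key and the rest\<close>
    define \<kappa> where "\<kappa> = Min (aio_key ` set (w1 @ w2))"
    have \<kappa>_occurs: "\<kappa> \<in> aio_key ` set (w1 @ w2)" and \<kappa>_min: "\<forall>l\<in>set (w1 @ w2). \<kappa> \<le> aio_key l"
      unfolding \<kappa>_def using False by (auto intro: Min_in)
    define g1 g2 r1 r2 where
      "g1 = filter (\<lambda>l. aio_key l = \<kappa>) w1" "g2 = filter (\<lambda>l. aio_key l = \<kappa>) w2"
      "r1 = filter (\<lambda>l. aio_key l \<noteq> \<kappa>) w1" "r2 = filter (\<lambda>l. aio_key l \<noteq> \<kappa>) w2"
    have w1: "w1 = g1 @ r1"
      unfolding g1_g2_r1_r2_def using less.prems(1) \<kappa>_min by (intro sorted_split_min_key) auto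
    have w2: "w2 = g2 @ r2"
      unfolding g1_g2_r1_r2_def using less.prems(2) \<kappa>_min by (intro sorted_split_min_key) auto
    have exps_g: "exps g1 = exps g2" and exps_r: "exps r1 = exps r2"
      unfolding g1_g2_r1_r2_def exps_filter_key by (simp_all only: less.prems(3))
    have "length r1 + length r2 < length w1 + length w2"
      using \<kappa>_occurs unfolding g1_g2_r1_r2_def
      by (auto intro: length_filter_less add_less_le_mono add_le_less_mono)
    moreover have "sorted (map aio_key r1)" "sorted (map aio_key r2)"
      unfolding g1_g2_r1_r2_def using less.prems by (auto intro: sorted_filter)
    ultimately have rest: "abel_sum (qder_word_id R r1) H' = abel_sum (qder_word_id R r2) H'" for H'
      using less.hyps exps_r by blast
    have group: "abel_sum (qder_word_id R g1) H' = abel_sum (qder_word_id R g2) H'" for H'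
      using exps_g by (intro abel_sum_qder_word_same_key [where \<kappa> = \<kappa>]) (auto simp: g1_g2_r1_r2_def)
    show ?thesis
      unfolding w1 w2 abel_sum_qder_word_append using group rest exps_g exps_up_word_cong [OF exps_r]
      by simp
  qed simp
qed

definition aio_sorted :: "'k elem \<Rightarrow> bool" where
  "aio_sorted f \<longleftrightarrow> (\<forall>(c, w)\<in>set f. sorted (map aio_key w))"

lemma aio_sorted_qder: "aio_sorted (qder R AIO f)"
  unfolding aio_sorted_def qder_def qder_word_eq_map [of R AIO] AIO_def
  by (auto split: prod.splits)

lemma abel_eq_qder_AIO_cong:
  fixes f g :: "'k::idom elem"
  assumes "aio_sorted f" "aio_sorted g" "abel_eq f g"
  shows "abel_eq (qder R AIO f) (qder R AIO g)"
  unfolding abel_eq_def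
proof
  fix H :: "expvec \<Rightarrow> 'k ratfun"
  define K where "K e = abel_sum (qder_word_id R (SOME w. sorted (map aio_key w) \<and> exps w = e)) H" for e
  have K: "abel_sum (qder_word_id R w) H = K (exps w)" if "sorted (map aio_key w)" for w
  proof -
    have "\<exists>w'. sorted (map aio_key w') \<and> exps w' = exps w"
      using that by blast
    then have "sorted (map aio_key (SOME w'. sorted (map aio_key w') \<and> exps w' = exps w))
        \<and> exps (SOME w'. sorted (map aio_key w') \<and> exps w' = exps w) = exps w"
      by (rule someI_ex)
    then show ?thesis
      unfolding K_def using that by (auto intro: abel_sum_qder_word_sorted)
  qed
  have "abel_sum (qder R AIO h) H = abel_sum h K" if "aio_sorted h" for h :: "'k elem"
  proof -
    have "abel_sum (qder R AIO h) H = sum_list (map (\<lambda>(c, w). coeff_emb c * abel_sum (qder_word_id R w) H) h)"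
      by (simp add: abel_sum_qder abel_sum_qder_word_AIO)
    also have "\<dots> = sum_list (map (\<lambda>(c, w). coeff_emb c * K (exps w)) h)"
      using that unfolding aio_sorted_def by (intro arg_cong [where f = sum_list] map_cong) (auto simp: K)
    finally show ?thesis
      by (simp add: abel_sum_def)
  qed
  then show "abel_sum (qder R AIO f) H = abel_sum (qder R AIO g) H"
    using assms unfolding abel_eq_def by simp
qed

section \<open>Products and the Leibniz rule\<close>

definition elem_mult :: "'k::comm_ring_1 elem \<Rightarrow> 'k elem \<Rightarrow> 'k elem" where
  "elem_mult f g = concat (map (\<lambda>(c, w). map (\<lambda>(d, v). (c * d, w @ v)) g) f)"

definition elem_up :: "'k elem \<Rightarrow> 'k elem" where
  "elem_up f = map (\<lambda>(c, w). (c, up_word w)) f"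

lemma elem_mult_Nil [simp]: "elem_mult [] g = []"
  by (simp add: elem_mult_def)

lemma elem_mult_Cons [simp]:
  "elem_mult ((c, w) # f) g = map (\<lambda>(d, v). (c * d, w @ v)) g @ elem_mult f g"
  by (simp add: elem_mult_def)

lemma set_elem_mult:
  "(c, w) \<in> set (elem_mult f g) \<Longrightarrow> \<exists>c1 w1 c2 w2. (c1, w1) \<in> set f \<and> (c2, w2) \<in> set g \<and> w = w1 @ w2"
  by (auto simp: elem_mult_def)

lemma elem_up_Nil [simp]: "elem_up [] = []"
  by (simp add: elem_up_def)

lemma elem_up_Cons [simp]: "elem_up ((c, w) # f) = (c, up_word w) # elem_up f"
  by (simp add: elem_up_def)

lemma elem_up_elem_mult: "elem_up (elem_mult f g) = elem_mult (elem_up f) (elem_up g)"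
  by (induction f) (auto simp: elem_up_def up_word_def comp_def case_prod_unfold)

lemma abel_sum_map_mult_prefix:
  "abel_sum (map (\<lambda>(d, v). (c * d, w @ v)) g) H = coeff_emb c * abel_sum g (\<lambda>e. H (exps w + e))"
  by (induction g) (auto simp: algebra_simps)

lemma abel_sum_elem_mult: "abel_sum (elem_mult f g) H = abel_sum f (\<lambda>e. abel_sum g (\<lambda>e'. H (e + e')))"
  by (induction f) (auto simp: abel_sum_map_mult_prefix)

lemma abel_eq_elem_mult_cong:
  "abel_eq f f' \<Longrightarrow> abel_eq g g' \<Longrightarrow> abel_eq (elem_mult f g) (elem_mult f' g')"
  by (simp add: abel_eq_def abel_sum_elem_mult)

lemma abel_eq_elem_mult_assoc: "abel_eq (elem_mult (elem_mult f g) h) (elem_mult f (elem_mult g h))"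
  by (simp add: abel_eq_def abel_sum_elem_mult add.assoc)

lemma abel_sum_qder_map_mult_prefix:
  "abel_sum (qder R (\<lambda>w. w) (map (\<lambda>(d, v). (c * d, w @ v)) g)) H
     = coeff_emb c * abel_sum (qder_word_id R w) (\<lambda>e. abel_sum (elem_up g) (\<lambda>e'. H (e + e')))
       + coeff_emb c * abel_sum (qder R (\<lambda>w. w) g) (\<lambda>e'. H (exps w + e'))"
proof (induction g)
  case (Cons x g)
  obtain d v where "x = (d, v)"
    by (cases x)
  with Cons show ?case
    by (simp add: abel_sum_qder_word_append abel_sum_add_fun abel_sum_mult_fun algebra_simps)
qed simp

lemma abel_sum_qder_elem_mult:
  "abel_sum (qder R (\<lambda>w. w) (elem_mult f g)) H
     = abel_sum (qder R (\<lambda>w. w) f) (\<lambda>e. abel_sum (elem_up g) (\<lambda>e'. H (e + e')))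
       + abel_sum f (\<lambda>e. abel_sum (qder R (\<lambda>w. w) g) (\<lambda>e'. H (e + e')))"
proof (induction f)
  case (Cons x f)
  obtain c w where "x = (c, w)"
    by (cases x)
  with Cons show ?case
    by (simp add: abel_sum_qder_map_mult_prefix)
qed simp

lemma abel_eq_qder_elem_mult_left:
  assumes "abel_eq (qder R AIO g) []"
  shows "abel_eq (qder R AIO (elem_mult f g)) (elem_mult (qder R AIO f) (elem_up g))"
  using assms by (simp add: abel_eq_def abel_sum_qder_AIO abel_sum_qder_elem_mult abel_sum_elem_mult)

lemma abel_eq_qder_elem_mult_right:
  assumes "abel_eq (qder R AIO f) []"
  shows "abel_eq (qder R AIO (elem_mult f g)) (elem_mult f (qder R AIO g))"
  using assms by (simp add: abel_eq_def abel_sum_qder_AIO abel_sum_qder_elem_mult abel_sum_elem_mult)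

lemma qder_pow_Suc: "qder_pow R \<rho> (Suc n) f = qder R \<rho> (qder_pow R \<rho> n f)"
  by (simp add: qder_pow_def)

lemma abel_eq_qder_pow_AIO:
  assumes "abel_eq (qder R AIO f) (T 0)" "\<And>m. aio_sorted (T m)"
    "\<And>m. abel_eq (qder R AIO (T m)) (T (Suc m))"
  shows "abel_eq (qder_pow R AIO (Suc m) f) (T m)"
proof (induction m)
  case 0
  then show ?case
    using assms(1) by (simp add: qder_pow_def)
next
  case (Suc m)
  have "abel_eq (qder_pow R AIO (Suc (Suc m)) f) (qder R AIO (T m))"
    unfolding qder_pow_Suc [of R AIO "Suc m"]
    by (intro abel_eq_qder_AIO_cong assms(2) Suc.IH) (simp add: qder_pow_Suc aio_sorted_qder)
  also have "abel_eq (qder R AIO (T m)) (T (Suc m))"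
    by (rule assms(3))
  finally show ?case .
qed

section \<open>Closed forms of the iterated derivatives\<close>

definition diff_letters :: "mvar \<Rightarrow> mvar \<Rightarrow> nat \<Rightarrow> 'k::comm_ring_1 elem" where
  "diff_letters s t j = [(1, [(s, j, True)]), (-1, [(t, j, True)])]"

fun diff_prod :: "mvar \<Rightarrow> mvar \<Rightarrow> nat \<Rightarrow> nat \<Rightarrow> 'k::comm_ring_1 elem" where
  "diff_prod s t 0 j = [(1, [])]"
| "diff_prod s t (Suc m) j = elem_mult (diff_letters s t j) (diff_prod s t m (Suc j))"

lemma abel_sum_qder_diff_letters: "abel_sum (qder R_inv (\<lambda>w. w) (diff_letters s t j)) H = 0"
  by (simp add: abel_sum_qder_word_Cons diff_letters_def R_inv_def up_word_def)

lemma abel_sum_qder_diff_prod: "abel_sum (qder R_inv (\<lambda>w. w) (diff_prod s t m j)) H = 0"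
  by (induction m arbitrary: j H) (simp_all add: abel_sum_qder_elem_mult abel_sum_qder_diff_letters)

lemma qder_diff_prod_R_inv: "abel_eq (qder R_inv AIO (diff_prod s t m j)) []"
  by (simp add: abel_eq_def abel_sum_qder_AIO abel_sum_qder_diff_prod)

lemma elem_up_diff_prod: "elem_up (diff_prod s t m j) = diff_prod s t m (Suc j)"
  by (induction m arbitrary: j)
    (simp_all del: elem_mult_Cons add: elem_up_elem_mult diff_letters_def up_word_def up_letter_def)

lemma diff_prod_Suc_right:
  "abel_eq (diff_prod s t (Suc m) j)
     (elem_mult (diff_prod s t m j) (diff_letters s t (j + m)) :: 'k::idom elem)"
proof (induction m arbitrary: j)
  case 0
  show ?case
    by (simp add: abel_eq_def abel_sum_elem_mult diff_letters_def)
next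
  case (Suc m)
  have "abel_eq (diff_prod s t (Suc (Suc m)) j :: 'k elem)
      (elem_mult (diff_letters s t j) (elem_mult (diff_prod s t m (Suc j)) (diff_letters s t (Suc j + m))))"
    unfolding diff_prod.simps(2) [of s t "Suc m"] by (rule abel_eq_elem_mult_cong [OF abel_eq_refl Suc.IH])
  also have "abel_eq \<dots> (elem_mult (elem_mult (diff_letters s t j) (diff_prod s t m (Suc j)))
      (diff_letters s t (j + Suc m)))"
    using abel_eq_sym [OF abel_eq_elem_mult_assoc] by simp
  finally show ?case
    by simp
qed

lemma aio_key_bounds: "2 * k \<le> aio_key (s, k, b) \<and> aio_key (s, k, b) < 2 * Suc k"
  by (cases s) (simp_all add: aio_key_def)

lemma diff_prod_keys:
  "(c, w) \<in> set (diff_prod s t m j :: 'k::comm_ring_1 elem)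
     \<Longrightarrow> sorted (map aio_key w) \<and> (\<forall>l\<in>set w. 2 * j \<le> aio_key l \<and> aio_key l < 2 * (j + m))"
proof (induction m arbitrary: j c w)
  case (Suc m)
  then have "(c, w) \<in> set (elem_mult (diff_letters s t j) (diff_prod s t m (Suc j)))"
    by simp
  then obtain c1 w1 c2 w2 where w1: "(c1, w1) \<in> set (diff_letters s t j :: 'k elem)"
      and w2: "(c2, w2) \<in> set (diff_prod s t m (Suc j) :: 'k elem)" and w: "w = w1 @ w2"
    using set_elem_mult by blast
  from w1 have "w1 = [(s, j, True)] \<or> w1 = [(t, j, True)]"
    by (auto simp: diff_letters_def)
  then have "sorted (map aio_key w1)" "\<forall>l\<in>set w1. 2 * j \<le> aio_key l \<and> aio_key l < 2 * Suc j"
    using aio_key_bounds by auto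
  moreover have "sorted (map aio_key w2)" "\<forall>l\<in>set w2. 2 * Suc j \<le> aio_key l \<and> aio_key l < 2 * (Suc j + m)"
    using Suc.IH [OF w2] by auto
  ultimately show ?case
    unfolding w by (fastforce simp: sorted_append)
qed simp

definition inv_x_deriv :: "nat \<Rightarrow> nat \<Rightarrow> 'k::comm_ring_1 elem" where
  "inv_x_deriv i m =
     elem_mult [((-1) ^ Suc m * monom 1 (i * Suc m), [(VX, i, False), (VY, i, True)])]
       (diff_prod VY VX m (Suc i))"

definition inv_y_deriv :: "nat \<Rightarrow> nat \<Rightarrow> 'k::comm_ring_1 elem" where
  "inv_y_deriv i m =
     elem_mult (diff_prod VX VY m (Suc i))
       [((-1) ^ Suc m * monom 1 (i * Suc m + (Suc m choose 2)),
         [(VX, Suc i + m, True), (VY, Suc i + m, False)])]"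

lemma aio_sorted_inv_x_deriv: "aio_sorted (inv_x_deriv i m :: 'k::comm_ring_1 elem)"
  unfolding aio_sorted_def
proof clarify
  fix c :: "'k poly" and w
  assume "(c, w) \<in> set (inv_x_deriv i m)"
  then obtain c' w' where mem: "(c', w') \<in> set (diff_prod VY VX m (Suc i) :: 'k elem)"
      and w: "w = [(VX, i, False), (VY, i, True)] @ w'"
    by (auto simp: inv_x_deriv_def)
  have "aio_key (VX, i, False) = 2 * i" "aio_key (VY, i, True) = 2 * i + 1"
    by (simp_all add: aio_key_def)
  with diff_prod_keys [OF mem] show "sorted (map aio_key w)"
    unfolding w by auto
qed

lemma aio_sorted_inv_y_deriv: "aio_sorted (inv_y_deriv i m :: 'k::comm_ring_1 elem)"
  unfolding aio_sorted_def
proof clarify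
  fix c :: "'k poly" and w
  assume "(c, w) \<in> set (inv_y_deriv i m)"
  then obtain c' w' where mem: "(c', w') \<in> set (diff_prod VX VY m (Suc i) :: 'k elem)"
      and w: "w = w' @ [(VX, Suc i + m, True), (VY, Suc i + m, False)]"
    by (auto simp: inv_y_deriv_def elem_mult_def)
  have "aio_key (VX, Suc i + m, True) = 2 * (Suc i + m)"
      "aio_key (VY, Suc i + m, False) = 2 * (Suc i + m) + 1"
    by (simp_all add: aio_key_def)
  with diff_prod_keys [OF mem] show "sorted (map aio_key w)"
    unfolding w by (auto simp: sorted_append)
qed

lemma qder_inv_x: "abel_eq (qder R_inv AIO [(1, [(VX, i, False)])]) (inv_x_deriv i 0)"
  by (simp add: abel_eq_def abel_sum_qder_AIO abel_sum_qder_word_AIO abel_sum_qder_word_Cons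
      R_inv_def inv_x_deriv_def up_word_def exps_letter_inverse algebra_simps)

lemma qder_inv_x_y:
  "abel_eq (qder R_inv AIO [(c, [(VX, i, False), (VY, i, True)])])
     (elem_mult [(- (c * monom 1 i), [(VX, i, False), (VY, i, True)])] (diff_letters VY VX (Suc i)))"
  by (simp add: abel_eq_def abel_sum_qder_AIO abel_sum_qder_word_AIO abel_sum_qder_word_Cons
      R_inv_def diff_letters_def up_word_def up_letter_def exps_letter_inverse algebra_simps)

lemma qder_inv_x_deriv:
  "abel_eq (qder R_inv AIO (inv_x_deriv i m)) (inv_x_deriv i (Suc m) :: 'k::idom elem)"
proof -
  define c :: "'k poly" where "c = (-1) ^ Suc m * monom 1 (i * Suc m)"
  define w where "w = [(VX, i, False), (VY, i, True)]"
  have coeff: "- (c * monom 1 i) = (-1) ^ Suc (Suc m) * monom 1 (i * Suc (Suc m))"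
    by (simp add: c_def mult_monom algebra_simps)
  have "abel_eq (qder R_inv AIO (inv_x_deriv i m))
      (elem_mult (qder R_inv AIO [(c, w)]) (diff_prod VY VX m (Suc (Suc i))))"
    using abel_eq_qder_elem_mult_left [OF qder_diff_prod_R_inv]
    unfolding inv_x_deriv_def c_def w_def elem_up_diff_prod .
  also have "abel_eq \<dots> (elem_mult (elem_mult [(- (c * monom 1 i), w)] (diff_letters VY VX (Suc i)))
      (diff_prod VY VX m (Suc (Suc i))))"
    unfolding w_def by (intro abel_eq_elem_mult_cong qder_inv_x_y abel_eq_refl)
  also have "abel_eq \<dots> (elem_mult [(- (c * monom 1 i), w)] (diff_prod VY VX (Suc m) (Suc i)))"
    unfolding diff_prod.simps(2) [of VY VX m] by (rule abel_eq_elem_mult_assoc)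
  also have "\<dots> = inv_x_deriv i (Suc m)"
    by (simp only: inv_x_deriv_def w_def coeff)
  finally show ?thesis .
qed

lemma qder_inv_y: "abel_eq (qder R_inv AIO [(1, [(VY, i, False)])]) (inv_y_deriv i 0)"
  by (simp add: abel_eq_def abel_sum_qder_AIO abel_sum_qder_word_AIO abel_sum_qder_word_Cons
      R_inv_def inv_y_deriv_def up_word_def exps_letter_inverse numeral_2_eq_2 algebra_simps)

lemma qder_x_inv_y:
  "abel_eq (qder R_inv AIO [(c, [(VX, n, True), (VY, n, False)])])
     (elem_mult (diff_letters VX VY n) [(- (c * monom 1 n), [(VX, Suc n, True), (VY, Suc n, False)])])"
  by (simp add: abel_eq_def abel_sum_qder_AIO abel_sum_qder_word_AIO abel_sum_qder_word_Cons
      abel_sum_elem_mult R_inv_def diff_letters_def up_word_def up_letter_def exps_letter_inverse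
      algebra_simps)

lemma qder_inv_y_deriv:
  "abel_eq (qder R_inv AIO (inv_y_deriv i m)) (inv_y_deriv i (Suc m) :: 'k::idom elem)"
proof -
  define n where "n = Suc i + m"
  define c :: "'k poly" where "c = (-1) ^ Suc m * monom 1 (i * Suc m + (Suc m choose 2))"
  define t where "t = [(- (c * monom 1 n), [(VX, Suc n, True), (VY, Suc n, False)])]"
  have "(Suc (Suc m) choose 2) = Suc m + (Suc m choose 2)"
    by (simp add: numeral_2_eq_2)
  then have coeff:
    "- (c * monom 1 n) = (-1) ^ Suc (Suc m) * monom 1 (i * Suc (Suc m) + (Suc (Suc m) choose 2))"
    by (simp add: c_def n_def mult_monom algebra_simps)
  have "abel_eq (qder R_inv AIO (inv_y_deriv i m))
      (elem_mult (diff_prod VX VY m (Suc i)) (qder R_inv AIO [(c, [(VX, n, True), (VY, n, False)])]))"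
    unfolding inv_y_deriv_def c_def n_def by (rule abel_eq_qder_elem_mult_right [OF qder_diff_prod_R_inv])
  also have "abel_eq \<dots> (elem_mult (diff_prod VX VY m (Suc i)) (elem_mult (diff_letters VX VY n) t))"
    unfolding t_def by (intro abel_eq_elem_mult_cong qder_x_inv_y abel_eq_refl)
  also have "abel_eq \<dots> (elem_mult (elem_mult (diff_prod VX VY m (Suc i)) (diff_letters VX VY n)) t)"
    by (rule abel_eq_sym [OF abel_eq_elem_mult_assoc])
  also have "abel_eq \<dots> (elem_mult (diff_prod VX VY (Suc m) (Suc i)) t)"
    unfolding n_def by (intro abel_eq_elem_mult_cong abel_eq_refl abel_eq_sym [OF diff_prod_Suc_right])
  also have "\<dots> = inv_y_deriv i (Suc m)"
    unfolding inv_y_deriv_def t_def coeff by (simp add: n_def)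
  finally show ?thesis .
qed

lemma eval_word_append: "eval_word ev (u @ w) = eval_word ev u * eval_word ev w"
  by (simp add: eval_word_def)

lemma eval_elem_Nil [simp]: "eval_elem ev [] = 0"
  by (simp add: eval_elem_def)

lemma eval_elem_Cons [simp]: "eval_elem ev ((c, w) # f) = coeff_emb c * eval_word ev w + eval_elem ev f"
  by (simp add: eval_elem_def)

lemma eval_elem_elem_mult: "eval_elem ev (elem_mult f g) = eval_elem ev f * eval_elem ev g"
proof (induction f)
  case (Cons x f)
  obtain c w where x: "x = (c, w)"
    by (cases x)
  have "eval_elem ev (map (\<lambda>(d, v). (c * d, w @ v)) g) = coeff_emb c * eval_word ev w * eval_elem ev g"
    by (induction g) (auto simp: eval_elem_def eval_word_append algebra_simps)
  with Cons show ?case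
    by (simp add: x eval_elem_def algebra_simps)
qed simp

lemma eval_elem_diff_prod: "eval_elem ev (diff_prod s t m j) = (\<Prod>k<m. ev s (j + k) - ev t (j + k))"
  by (induction m arbitrary: j)
    (simp_all del: elem_mult_Cons prod.lessThan_Suc
      add: eval_elem_elem_mult diff_letters_def eval_word_def prod.lessThan_Suc_shift)

lemma eval_word_eq_prod_power_int:
  assumes nonzero: "\<And>s k. ev s k \<noteq> 0" and "finite A" and "\<And>s k b. (s, k, b) \<in> set w \<Longrightarrow> (s, k) \<in> A"
  shows "eval_word ev w = (\<Prod>p\<in>A. ev (fst p) (snd p) powi exps w (fst p) (snd p))"
  using assms(3)
proof (induction w)
  case Nil
  then show ?case
    by (simp add: eval_word_def zero_fun_apply)
next
  case (Cons l w)
  obtain s k b where l: "l = (s, k, b)"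
    by (cases l)
  with Cons.prems have "(s, k) \<in> A"
    by auto
  have IH: "eval_word ev w = (\<Prod>p\<in>A. ev (fst p) (snd p) powi exps w (fst p) (snd p))"
    by (rule Cons.IH) (use Cons.prems in auto)
  have "(\<Prod>p\<in>A. ev (fst p) (snd p) powi exps_letter l (fst p) (snd p))
      = (\<Prod>p\<in>A. if p = (s, k) then ev s k powi (if b then 1 else -1) else 1)"
    by (rule prod.cong) (auto simp: l exps_letter_def)
  also have "\<dots> = (if b then ev s k else inverse (ev s k))"
    using \<open>finite A\<close> \<open>(s, k) \<in> A\<close> by (simp add: prod.delta power_int_minus)
  finally have "eval_word ev (l # w)
      = (\<Prod>p\<in>A. ev (fst p) (snd p) powi exps_letter l (fst p) (snd p)) * eval_word ev w"
    by (simp add: eval_word_def l)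
  also have "\<dots> = (\<Prod>p\<in>A. ev (fst p) (snd p) powi exps (l # w) (fst p) (snd p))"
    unfolding IH by (simp add: prod.distrib power_int_add nonzero plus_fun_apply)
  finally show ?case .
qed

lemma eval_elem_eq_abel_sum:
  assumes "\<And>s k. ev s k \<noteq> 0" "finite A"
    "\<And>c w s k b. (c, w) \<in> set f \<Longrightarrow> (s, k, b) \<in> set w \<Longrightarrow> (s, k) \<in> A"
  shows "eval_elem ev f = abel_sum f (\<lambda>e. \<Prod>p\<in>A. ev (fst p) (snd p) powi e (fst p) (snd p))"
  unfolding eval_elem_def abel_sum_def
  by (intro arg_cong [where f = sum_list] map_cong refl)
    (auto simp: eval_word_eq_prod_power_int [OF assms(1,2)] assms(3))

lemma eval_elem_abel_eq:
  assumes "\<And>s k. ev s k \<noteq> 0" "abel_eq f g"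
  shows "eval_elem ev f = eval_elem ev g"
proof -
  define A where "A = (\<lambda>(s, k, b). (s, k)) ` (\<Union>(c, w)\<in>set (f @ g). set w)"
  have "finite A"
    by (auto simp: A_def)
  have A_covers: "(s, k) \<in> A" if "(c, w) \<in> set (f @ g)" "(s, k, b) \<in> set w" for c w s k b
    using that unfolding A_def by force
  have "eval_elem ev h = abel_sum h (\<lambda>e. \<Prod>p\<in>A. ev (fst p) (snd p) powi e (fst p) (snd p))"
    if "h \<in> {f, g}" for h
    using that by (intro eval_elem_eq_abel_sum assms(1) \<open>finite A\<close>) (auto intro: A_covers)
  then show ?thesis
    using assms(2) unfolding abel_eq_def by simp
qed

lemma Xv_neq_0: "Xv \<noteq> (0 :: 'k::idom ratfun)"
  by (simp add: Xv_def Zero_fract_def eq_fract)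

lemma Yv_neq_0: "Yv \<noteq> (0 :: 'k::idom ratfun)"
  by (simp add: Yv_def Zero_fract_def eq_fract)

lemma Xv_neq_Yv: "Xv \<noteq> (Yv :: 'k::idom ratfun)"
  by (simp add: Xv_def Yv_def eq_fract)

lemma phi_inv_neq_0: "phi_inv s k \<noteq> (0 :: 'k::idom ratfun)"
  by (cases s) (simp_all add: phi_inv_def Xv_neq_0 Yv_neq_0)

lemma eval_qder_pow_inv_x:
  "eval_elem phi_inv (qder_pow R_inv AIO (Suc m) [(1, [(VX, i, False)])])
     = (-1) ^ Suc m * Qv ^ (i * Suc m) * (Yv - Xv) ^ m * (inverse Xv * Yv :: 'k::idom ratfun)"
proof -
  have "abel_eq (qder_pow R_inv AIO (Suc m) [(1, [(VX, i, False)])]) (inv_x_deriv i m :: 'k elem)"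
    by (rule abel_eq_qder_pow_AIO [OF qder_inv_x aio_sorted_inv_x_deriv qder_inv_x_deriv])
  then have "eval_elem phi_inv (qder_pow R_inv AIO (Suc m) [(1, [(VX, i, False)])])
      = eval_elem phi_inv (inv_x_deriv i m :: 'k elem)"
    by (rule eval_elem_abel_eq [OF phi_inv_neq_0])
  also have "\<dots> = (-1) ^ Suc m * Qv ^ (i * Suc m) * (Yv - Xv) ^ m * (inverse Xv * Yv)"
    by (simp del: elem_mult_Cons add: inv_x_deriv_def eval_elem_elem_mult eval_elem_diff_prod
        eval_word_def phi_inv_def mult_ac)
  finally show ?thesis .
qed

lemma eval_qder_pow_inv_y:
  "eval_elem phi_inv (qder_pow R_inv AIO (Suc m) [(1, [(VY, i, False)])])
     = (-1) ^ Suc m * Qv ^ (i * Suc m + (Suc m choose 2)) * (Xv - Yv) ^ m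
       * (Xv * inverse Yv :: 'k::idom ratfun)"
proof -
  have "abel_eq (qder_pow R_inv AIO (Suc m) [(1, [(VY, i, False)])]) (inv_y_deriv i m :: 'k elem)"
    by (rule abel_eq_qder_pow_AIO [OF qder_inv_y aio_sorted_inv_y_deriv qder_inv_y_deriv])
  then have "eval_elem phi_inv (qder_pow R_inv AIO (Suc m) [(1, [(VY, i, False)])])
      = eval_elem phi_inv (inv_y_deriv i m :: 'k elem)"
    by (rule eval_elem_abel_eq [OF phi_inv_neq_0])
  also have "\<dots> = (-1) ^ Suc m * Qv ^ (i * Suc m + (Suc m choose 2)) * (Xv - Yv) ^ m * (Xv * inverse Yv)"
    by (simp del: elem_mult_Cons add: inv_y_deriv_def eval_elem_elem_mult eval_elem_diff_prod
        eval_word_def phi_inv_def mult_ac)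
  finally show ?thesis .
qed

lemma sign_power_diff_swap:
  fixes a b z :: "'a::field"
  assumes "a \<noteq> b"
  shows "(-1) ^ Suc m * z ^ Suc m * (b - a) ^ m = - (((a - b) * z) ^ Suc m / (a - b))"
proof -
  have "(b - a) ^ m = (-1) ^ m * (a - b) ^ m"
    by (metis minus_diff_eq power_minus)
  moreover have "(-1) ^ Suc m * (-1) ^ m = (-1 :: 'a)"
    by simp
  moreover have "((a - b) * z) ^ Suc m / (a - b) = (a - b) ^ m * z ^ Suc m"
    using assms by (simp add: power_mult_distrib mult.assoc)
  ultimately show ?thesis
    by (metis (no_types, lifting) mult.commute mult.left_commute mult_minus1)
qed

lemma fps_nth_Suc_compose_linear:
  fixes F :: "'a::field fps"
  shows "((1 - fps_const r * fps_compose F (fps_const c * fps_X)) / fps_const d) $ Suc m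
     = - (r * c ^ Suc m * F $ Suc m / d)"
proof -
  have "((1 - fps_const r * fps_compose F (fps_const c * fps_X)) / fps_const d) $ Suc m
      = inverse d * - (r * (c ^ Suc m * F $ Suc m))"
    by simp
  then show ?thesis
    by (simp add: divide_inverse mult_ac)
qed

lemma gen_eval_inv_x:
  "gen_eval R_inv AIO phi_inv [(1, [(VX, i, False)])]
     = (1 - fps_const (inverse Xv * Yv) * fps_compose e_q (fps_const ((Xv - Yv) * Qv ^ i) * fps_X))
       / fps_const (Xv - Yv :: 'k::idom ratfun)"
proof (rule fps_ext)
  fix n
  show "gen_eval R_inv AIO phi_inv [(1, [(VX, i, False)])] $ n
     = ((1 - fps_const (inverse Xv * Yv) * fps_compose e_q (fps_const ((Xv - Yv) * Qv ^ i) * fps_X))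
       / fps_const (Xv - Yv :: 'k ratfun)) $ n"
  proof (cases n)
    case 0
    have "1 - inverse Xv * Yv = (Xv - Yv) * inverse (Xv :: 'k ratfun)"
      using Xv_neq_0 [where 'k = 'k] by (simp add: field_simps)
    moreover have "Xv - Yv \<noteq> (0 :: 'k ratfun)"
      using Xv_neq_Yv by simp
    ultimately show ?thesis
      using 0 by (simp add: gen_eval_def qder_pow_def eval_word_def phi_inv_def e_q_def qpoch_def)
  next
    case (Suc m)
    have "gen_eval R_inv AIO phi_inv [(1, [(VX, i, False)])] $ n
        = (-1) ^ Suc m * (Qv ^ i) ^ Suc m * (Yv - Xv) ^ m * (inverse Xv * Yv) / qpoch (Suc m)"
      by (simp add: Suc gen_eval_def eval_qder_pow_inv_x power_add power_mult mult_ac)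
    also have "\<dots> = - (((Xv - Yv) * Qv ^ i) ^ Suc m / (Xv - Yv)) * (inverse Xv * Yv) / qpoch (Suc m)"
      by (simp only: sign_power_diff_swap [OF Xv_neq_Yv])
    also have "\<dots> = ((1 - fps_const (inverse Xv * Yv) * fps_compose e_q (fps_const ((Xv - Yv) * Qv ^ i) * fps_X))
       / fps_const (Xv - Yv)) $ n"
      by (simp only: Suc fps_nth_Suc_compose_linear) (simp add: e_q_def divide_inverse mult_ac)
    finally show ?thesis .
  qed
qed

lemma gen_eval_inv_y:
  "gen_eval R_inv AIO phi_inv [(1, [(VY, i, False)])]
     = (1 - fps_const (Xv * inverse Yv) * fps_compose E_q (fps_const ((Yv - Xv) * Qv ^ i) * fps_X))
       / fps_const (Yv - Xv :: 'k::idom ratfun)"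
proof (rule fps_ext)
  fix n
  show "gen_eval R_inv AIO phi_inv [(1, [(VY, i, False)])] $ n
     = ((1 - fps_const (Xv * inverse Yv) * fps_compose E_q (fps_const ((Yv - Xv) * Qv ^ i) * fps_X))
       / fps_const (Yv - Xv :: 'k ratfun)) $ n"
  proof (cases n)
    case 0
    have "1 - Xv * inverse Yv = (Yv - Xv) * inverse (Yv :: 'k ratfun)"
      using Yv_neq_0 [where 'k = 'k] by (simp add: field_simps)
    moreover have "Yv - Xv \<noteq> (0 :: 'k ratfun)"
      using Xv_neq_Yv [where 'k = 'k] by (metis right_minus_eq)
    ultimately show ?thesis
      using 0 by (simp add: gen_eval_def qder_pow_def eval_word_def phi_inv_def E_q_def qpoch_def
          numeral_2_eq_2)
  next
    case (Suc m)
    have "gen_eval R_inv AIO phi_inv [(1, [(VY, i, False)])] $ n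
        = (-1) ^ Suc m * (Qv ^ i) ^ Suc m * (Xv - Yv) ^ m * (Qv ^ (Suc m choose 2) * (Xv * inverse Yv))
          / qpoch (Suc m)"
      by (simp add: Suc gen_eval_def eval_qder_pow_inv_y power_add power_mult mult_ac)
    also have "\<dots> = - (((Yv - Xv) * Qv ^ i) ^ Suc m / (Yv - Xv))
        * (Qv ^ (Suc m choose 2) * (Xv * inverse Yv)) / qpoch (Suc m)"
      by (simp only: sign_power_diff_swap [OF not_sym [OF Xv_neq_Yv]])
    also have "\<dots> = ((1 - fps_const (Xv * inverse Yv) * fps_compose E_q (fps_const ((Yv - Xv) * Qv ^ i) * fps_X))
       / fps_const (Yv - Xv)) $ n"
      by (simp only: Suc fps_nth_Suc_compose_linear) (simp add: E_q_def divide_inverse mult_ac)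
    finally show ?thesis .
  qed
qed

theorem corollary5p6:
  fixes i :: nat
  shows "gen_eval R_inv AIO phi_inv [(1, [(VX, i, False)])]
           = (1 - fps_const (inverse Xv * Yv)
                  * fps_compose e_q (fps_const ((Xv - Yv) * Qv ^ i) * fps_X))
             / fps_const (Xv - Yv :: ('k::{idom, ring_char_0}) ratfun)
       \<and> gen_eval R_inv AIO phi_inv [(1, [(VY, i, False)])]
           = (1 - fps_const (Xv * inverse Yv)
                  * fps_compose E_q (fps_const ((Yv - Xv) * Qv ^ i) * fps_X))
             / fps_const (Yv - Xv :: 'k ratfun)"
  using gen_eval_inv_x gen_eval_inv_y by blast

end
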